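(* Let $k\ge 1$ and let $L=(l_1,\ldots,l_k)$ be a sequence of positive integers, and let $S=S(L)$ be the spider defined by $L$, with head $v_0$. Let $t$ be an integer with $1\le t\le \alpha(S)$. Then for every $1\le i\le k$ we have $$|\mathcal{I}^t_{v_0}(S)|\le |\mathcal{I}^t_{v_{i,l_i}}(S)|.$$
   Context: For a graph $G$, $\alpha(G)$ is the maximum size of an independent set in $G$, and for an integer $t\le\alpha(G)$, $\mathcal{I}^t(G)$ denotes the family of all independent sets of $G$ of size $t$. For a vertex $x$, $\mathcal{I}^t_x(G)$ denotes the subfamily of sets in $\mathcal{I}^t(G)$ containing $x$ (the star centered at $x$). Given a sequence of positive integers $L=(l_1,\ldots,l_k)$, the spider $S(L)$ is the tree consisting of a head vertex $v_0$ and, for each $1\le i\le k$, a leg which is the path $v_0,v_{i,1},v_{i,2},\ldots,v_{i,l_i}$; distinct legs share only $v_0$. *)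

theory Defs
  imports Main
begin

definition indep_set :: "'a set \<Rightarrow> ('a \<Rightarrow> 'a \<Rightarrow> bool) \<Rightarrow> 'a set \<Rightarrow> bool" where
  "indep_set V E I \<longleftrightarrow> I \<subseteq> V \<and> (\<forall>u\<in>I. \<forall>v\<in>I. \<not> E u v)"

definition indep_number :: "'a set \<Rightarrow> ('a \<Rightarrow> 'a \<Rightarrow> bool) \<Rightarrow> nat" where
  "indep_number V E = Max {card I | I. indep_set V E I}"

definition indep_family :: "'a set \<Rightarrow> ('a \<Rightarrow> 'a \<Rightarrow> bool) \<Rightarrow> nat \<Rightarrow> 'a set set" where
  "indep_family V E t = {I. indep_set V E I \<and> card I = t}"

definition indep_star :: "'a set \<Rightarrow> ('a \<Rightarrow> 'a \<Rightarrow> bool) \<Rightarrow> nat \<Rightarrow> 'a \<Rightarrow> 'a set set" where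
  "indep_star V E t x = {I \<in> indep_family V E t. x \<in> I}"

(* Spider S(L) for L = [l_1,...,l_k]: head v_0 = (0,0); v_{i,j} = (i,j)
   for 1 <= i <= k, 1 <= j <= l_i (where l_i = L ! (i-1)). *)
definition spider_verts :: "nat list \<Rightarrow> (nat \<times> nat) set" where
  "spider_verts L = {(0,0)} \<union> {(i,j). 1 \<le> i \<and> i \<le> length L \<and> 1 \<le> j \<and> j \<le> L ! (i - 1)}"

definition spider_adj :: "nat list \<Rightarrow> nat \<times> nat \<Rightarrow> nat \<times> nat \<Rightarrow> bool" where
  "spider_adj L u v \<longleftrightarrow> u \<in> spider_verts L \<and> v \<in> spider_verts L \<and>
     ((u = (0,0) \<and> fst v \<ge> 1 \<and> snd v = 1) \<or>
      (v = (0,0) \<and> fst u \<ge> 1 \<and> snd u = 1) \<or>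
      (fst u \<ge> 1 \<and> fst u = fst v \<and> (snd v = snd u + 1 \<or> snd u = snd v + 1)))"

end

theory Submission
  imports Defs
begin

text \<open>Reflecting the spider along leg i (swapping the head v0 with the leaf v_{i,l_i} and
reversing the inner vertices of that leg) is an involution of the vertex set that preserves
non-adjacency between vertices not adjacent to v0. An independent set containing v0 contains
no neighbour of v0, so the reflection maps the star at v0 injectively into the star at the leaf.
The comparison holds for every t.\<close>

lemma card_indep_star_le_by_injection:
  assumes "finite V" and "inj f"
    and "\<And>I. indep_set V E I \<Longrightarrow> x \<in> I \<Longrightarrow> indep_set V E (f ` I)"
    and "f x = y"
  shows "card (indep_star V E t x) \<le> card (indep_star V E t y)"
proof (rule card_inj_on_le[where f = "image f"])
  show "inj_on (image f) (indep_star V E t x)"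
    using \<open>inj f\<close> by (meson inj_image_eq_iff inj_onI)
  show "finite (indep_star V E t y)"
    by (rule finite_subset[of _ "Pow V"])
       (auto simp: indep_star_def indep_family_def indep_set_def \<open>finite V\<close>)
  show "image f ` indep_star V E t x \<subseteq> indep_star V E t y"
    using assms(2-4)
    by (auto simp: indep_star_def indep_family_def card_image inj_on_subset)
qed

lemma finite_spider_verts: "finite (spider_verts L)"
proof -
  have "spider_verts L \<subseteq> {0..length L} \<times> {0..sum_list L}"
  proof (clarsimp simp: spider_verts_def)
    fix a b assume "Suc 0 \<le> a" "a \<le> length L" "b \<le> L ! (a - Suc 0)"
    then have "L ! (a - Suc 0) \<le> sum_list L" by (intro elem_le_sum_list) auto
    then show "b \<le> sum_list L" using \<open>b \<le> _\<close> by linarith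
  qed
  then show ?thesis by (rule finite_subset) auto
qed

definition leg_reflection :: "nat \<Rightarrow> nat \<Rightarrow> nat \<times> nat \<Rightarrow> nat \<times> nat" where
  "leg_reflection i l p =
     (if p = (0,0) then (i,l) else if p = (i,l) then (0,0)
      else if fst p = i \<and> 1 \<le> snd p \<and> snd p < l then (i, l - snd p) else p)"

lemma leg_reflection_involution:
  "1 \<le> i \<Longrightarrow> 1 \<le> l \<Longrightarrow> leg_reflection i l (leg_reflection i l p) = p"
  by (cases p) (auto simp: leg_reflection_def)

lemma inj_leg_reflection: "1 \<le> i \<Longrightarrow> 1 \<le> l \<Longrightarrow> inj (leg_reflection i l)"
  by (metis injI leg_reflection_involution)

lemma leg_reflection_in_spider_verts:
  assumes "1 \<le> i" "i \<le> length L" "1 \<le> L ! (i - 1)" "p \<in> spider_verts L"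
  shows "leg_reflection i (L ! (i - 1)) p \<in> spider_verts L"
  using assms by (cases p) (auto simp: leg_reflection_def spider_verts_def)

lemma leg_reflection_preserves_nonadjacent:
  assumes "1 \<le> i" "i \<le> length L" "1 \<le> L ! (i - 1)"
    and "u \<in> spider_verts L" "v \<in> spider_verts L" "\<not> spider_adj L u v"
    and "\<not> spider_adj L (0,0) u" "\<not> spider_adj L (0,0) v"
  shows "\<not> spider_adj L (leg_reflection i (L ! (i - 1)) u) (leg_reflection i (L ! (i - 1)) v)"
  using assms
  by (cases u; cases v)
     (auto simp: leg_reflection_def spider_adj_def spider_verts_def split: if_splits)

lemma indep_set_leg_reflection:
  assumes "1 \<le> i" "i \<le> length L" "1 \<le> L ! (i - 1)"
    and "indep_set (spider_verts L) (spider_adj L) I" "(0,0) \<in> I"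
  shows "indep_set (spider_verts L) (spider_adj L) (leg_reflection i (L ! (i - 1)) ` I)"
proof -
  let ?r = "leg_reflection i (L ! (i - 1))"
  have "?r ` I \<subseteq> spider_verts L"
    using assms(4) leg_reflection_in_spider_verts[OF assms(1-3)] by (auto simp: indep_set_def)
  moreover have "\<not> spider_adj L (?r u) (?r v)" if "u \<in> I" "v \<in> I" for u v
    using assms(4,5) that leg_reflection_preserves_nonadjacent[OF assms(1-3)]
    unfolding indep_set_def by blast
  ultimately show ?thesis by (auto simp: indep_set_def)
qed

theorem theorem2p2:
  fixes L :: "nat list" and t i :: nat
  assumes "length L \<ge> 1"
    and "\<forall>l \<in> set L. l > 0"
    and "1 \<le> t" and "t \<le> indep_number (spider_verts L) (spider_adj L)"
    and "1 \<le> i" and "i \<le> length L"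
  shows "card (indep_star (spider_verts L) (spider_adj L) t (0,0))
         \<le> card (indep_star (spider_verts L) (spider_adj L) t (i, L ! (i - 1)))"
proof (rule card_indep_star_le_by_injection)
  have leg_positive: "1 \<le> L ! (i - 1)"
    using assms(2,5,6) by (simp add: Suc_le_eq)
  show "finite (spider_verts L)" by (rule finite_spider_verts)
  show "inj (leg_reflection i (L ! (i - 1)))"
    using inj_leg_reflection[OF assms(5) leg_positive] .
  show "leg_reflection i (L ! (i - 1)) (0,0) = (i, L ! (i - 1))"
    by (simp add: leg_reflection_def)
  show "indep_set (spider_verts L) (spider_adj L) (leg_reflection i (L ! (i - 1)) ` I)"
    if "indep_set (spider_verts L) (spider_adj L) I" "(0,0) \<in> I" for I
    using indep_set_leg_reflection[OF assms(5,6) leg_positive that] .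
qed

end
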